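(* Let $Q_t(x)=1+t(e^x-1)$. For every integer $k\geq1$, the coefficient of $x^{k-1}$ in the formal power series $Q_t'(x)/Q_t(x)$ (equivalently $\frac{1}{2\pi\sqrt{-1}}\oint\frac{Q_t'(x)}{x^kQ_t(x)}dx$) equals $$t\sum_{i=0}^{k-1}\frac{S(k,k-i)}{\binom{k-1}{i}\cdot i!}(-t)^{k-1-i}.$$
   Context: $S(n,m)$ is the Stirling number of the second kind (number of partitions of $\{1,\ldots,n\}$ into exactly $m$ nonempty blocks), with $S(n,m)=0$ for $m>n$, $S(n,0)=0$ for $n>0$, $S(0,0)=1$. *)

theory Defs
  imports "HOL-Combinatorics.Stirling" "HOL-Computational_Algebra.Formal_Power_Series"
begin

definition Q_fps :: "'a::field_char_0 \<Rightarrow> 'a fps" where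
  "Q_fps t = 1 + fps_const t * (fps_exp 1 - 1)"

end

theory Submission
  imports Defs
begin

(* Q_t is the composite of 1 + t x with e^x - 1, so Q_t'/Q_t is the derivative of ln(1 + t x)
   composed with e^x - 1, i.e. of sum_{m >= 1} (-1)^(m-1) t^m (e^x - 1)^m / m.  As
   (e^x - 1)^m = m! sum_n S(n,m) x^n / n!, the coefficient of x^(k-1) is
   t sum_{q < k} q! / (k-1)! S(k, q+1) (-t)^q, and substituting i = k - 1 - q gives the claim. *)

unbundle fps_syntax

lemma fps_deriv_exp_minus_one_power:
  "fps_deriv ((fps_exp (1::'a::field_char_0) - 1) ^ Suc m) =
     of_nat (Suc m) * ((fps_exp 1 - 1) ^ Suc m + (fps_exp 1 - 1) ^ m)"
  by (subst fps_deriv_power') (simp add: algebra_simps)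

lemma fps_exp_minus_one_power_nth:
  "((fps_exp (1::'a::field_char_0) - 1) ^ m) $ n = fact m * of_nat (Stirling n m) / fact n"
proof (induction n arbitrary: m)
  case 0
  then show ?case by (cases m) auto
next
  case (Suc n)
  show ?case
  proof (cases m)
    case 0
    then show ?thesis by simp
  next
    case (Suc j)
    let ?E = "fps_exp (1::'a) - 1"
    have "of_nat (Suc n) * (?E ^ Suc j) $ Suc n = fps_deriv (?E ^ Suc j) $ n"
      by (simp only: fps_deriv_nth Suc_eq_plus1)
    also have "\<dots> = of_nat (Suc j) * ((?E ^ Suc j) $ n + (?E ^ j) $ n)"
      by (simp only: fps_deriv_exp_minus_one_power fps_of_nat[symmetric]
          fps_mult_left_const_nth fps_add_nth)
    also have "\<dots> = of_nat (Suc j) *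
        (fact (Suc j) * of_nat (Stirling n (Suc j)) + fact j * of_nat (Stirling n j)) / fact n"
      unfolding Suc.IH by (simp add: field_simps)
    also have "\<dots> = fact (Suc j) * of_nat (Stirling (Suc n) (Suc j)) / fact n"
      by (simp add: field_simps)
    also have "\<dots> =
        of_nat (Suc n) * (fact (Suc j) * of_nat (Stirling (Suc n) (Suc j)) / fact (Suc n))"
      by (simp del: of_nat_Suc Stirling.simps)
    finally have "of_nat (Suc n) * (?E ^ Suc j) $ Suc n =
        of_nat (Suc n) * (fact (Suc j) * of_nat (Stirling (Suc n) (Suc j)) / fact (Suc n))" .
    then show ?thesis
      unfolding Suc by (rule mult_left_cancel[THEN iffD1, rotated]) (simp del: of_nat_Suc)
  qed
qed

lemma fps_compose_logarithmic_deriv: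
  fixes D L E :: "'a::field fps"
  assumes log: "D * fps_deriv L = fps_deriv D" and "D $ 0 \<noteq> 0" and "E $ 0 = 0"
  shows "fps_deriv (D oo E) / (D oo E) = fps_deriv (L oo E)"
proof -
  have "(D oo E) * fps_deriv (L oo E) = ((D * fps_deriv L) oo E) * fps_deriv E"
    using \<open>E $ 0 = 0\<close> by (simp add: fps_compose_deriv fps_compose_mult_distrib mult.assoc)
  also have "\<dots> = fps_deriv (D oo E)"
    using \<open>E $ 0 = 0\<close> by (simp add: log fps_compose_deriv)
  finally have "(D oo E) * fps_deriv (L oo E) = fps_deriv (D oo E)" .
  moreover have "D oo E \<noteq> 0"
    using \<open>D $ 0 \<noteq> 0\<close> by (metis fps_compose_nth_0 fps_zero_nth)
  ultimately show ?thesis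
    by (metis nonzero_mult_div_cancel_left)
qed

lemma fps_ln_linear_nth_Suc:
  "(fps_ln 1 oo (fps_const t * fps_X)) $ Suc n = (- 1) ^ n * t ^ Suc n / of_nat (Suc n)"
  by (simp add: fps_ln_nth)

lemma fps_deriv_ln_linear:
  fixes t :: "'a::field_char_0"
  shows "fps_deriv (fps_ln 1 oo (fps_const t * fps_X)) = Abs_fps (\<lambda>n. t * (- t) ^ n)"
  by (rule fps_ext)
    (simp add: fps_ln_nth del: of_nat_Suc, simp add: power_minus[of t] field_simps del: of_nat_Suc)

lemma fps_ln_linear_logarithmic_deriv:
  fixes t :: "'a::field_char_0"
  shows "(1 + fps_const t * fps_X) * fps_deriv (fps_ln 1 oo (fps_const t * fps_X)) =
    fps_deriv (1 + fps_const t * fps_X)"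
proof (rule fps_ext)
  fix n
  show "((1 + fps_const t * fps_X) * fps_deriv (fps_ln 1 oo (fps_const t * fps_X))) $ n =
      fps_deriv (1 + fps_const t * fps_X) $ n"
    unfolding fps_deriv_ln_linear by (cases n) (simp_all add: algebra_simps)
qed

lemma Q_fps_eq_compose: "Q_fps t = (1 + fps_const t * fps_X) oo (fps_exp 1 - 1)"
  by (simp add: Q_fps_def fps_compose_add_distrib fps_compose_mult_distrib)

lemma fps_ln_linear_compose_exp_minus_one_nth:
  fixes t :: "'a::field_char_0"
  shows "of_nat (Suc p) * ((fps_ln 1 oo (fps_const t * fps_X)) oo (fps_exp 1 - 1)) $ Suc p =
    t * (\<Sum>q = 0..p. fact q / fact p * of_nat (Stirling (Suc p) (Suc q)) * (- t) ^ q)"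
proof -
  have "((fps_ln 1 oo (fps_const t * fps_X)) oo (fps_exp 1 - 1)) $ Suc p =
      (\<Sum>q = 0..p. (- 1) ^ q * t ^ Suc q / of_nat (Suc q) *
         (fact (Suc q) * of_nat (Stirling (Suc p) (Suc q)) / fact (Suc p)))"
    unfolding fps_compose_nth[of _ _ "Suc p"] sum.atLeast0_atMost_Suc_shift
    by (simp only: fps_compose_nth_0 fps_ln_0 mult_zero_left add_0 comp_def
        fps_ln_linear_nth_Suc fps_exp_minus_one_power_nth)
  moreover have summand:
    "of_nat (Suc p) * ((- 1) ^ q * t ^ Suc q / of_nat (Suc q) * (fact (Suc q) * s / fact (Suc p))) =
      t * (fact q / fact p * s * (- t) ^ q)" for q and s :: 'a
  proof -
    have "(of_nat (Suc p) :: 'a) \<noteq> 0" "(of_nat (Suc q) :: 'a) \<noteq> 0"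
      by (simp_all del: of_nat_Suc)
    then show ?thesis
      by (simp add: power_minus[of t] field_simps del: of_nat_Suc)
  qed
  ultimately show ?thesis
    by (simp only: sum_distrib_left summand)
qed

lemma fact_diff_div_fact:
  assumes "i \<le> p"
  shows "fact (p - i) / fact p = (1 / (of_nat (p choose i) * fact i) :: 'a::field_char_0)"
  using assms by (simp add: binomial_fact field_simps)

theorem lemma4p3:
  fixes t :: "'a::field_char_0" and k :: nat
  assumes "k \<ge> 1"
  shows "fps_nth (fps_deriv (Q_fps t) / Q_fps t) (k - 1) =
    t * (\<Sum>i = 0..k-1. of_nat (Stirling k (k - i)) / (of_nat ((k - 1) choose i) * fact i)
          * (- t) ^ (k - 1 - i))"
proof -
  obtain p where k: "k = Suc p"
    using assms by (cases k) auto
  have "fps_deriv (Q_fps t) / Q_fps t =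
      fps_deriv ((fps_ln 1 oo (fps_const t * fps_X)) oo (fps_exp 1 - 1))"
    unfolding Q_fps_eq_compose
    by (rule fps_compose_logarithmic_deriv[OF fps_ln_linear_logarithmic_deriv]) simp_all
  then have "fps_nth (fps_deriv (Q_fps t) / Q_fps t) (k - 1) =
      t * (\<Sum>q = 0..p. fact q / fact p * of_nat (Stirling (Suc p) (Suc q)) * (- t) ^ q)"
    by (simp add: k fps_ln_linear_compose_exp_minus_one_nth del: of_nat_Suc)
  also have "\<dots> = t * (\<Sum>i = 0..p. fact (p - i) / fact p *
      of_nat (Stirling (Suc p) (Suc p - i)) * (- t) ^ (p - i))"
    by (subst sum.atLeastAtMost_rev) (simp add: Suc_diff_le)
  also have "\<dots> = t * (\<Sum>i = 0..p. of_nat (Stirling (Suc p) (Suc p - i)) /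
      (of_nat (p choose i) * fact i) * (- t) ^ (p - i))"
    by (intro arg_cong[where f = "(*) t"] sum.cong) (simp_all add: fact_diff_div_fact)
  finally show ?thesis
    by (simp add: k)
qed

end
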